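(* Let $a_1,\ldots,a_n$ be relatively prime positive integers, let $\mathcal{S}=\langle a_1,\ldots,a_n\rangle$, and let $e$ be a positive integer with $\gcd(e,a_1)=1$. Put $\mathcal{S}^e=\langle a_1,ea_2,\ldots,ea_n\rangle$. Then $\mathrm{type}(\mathcal{S})=\mathrm{type}(\mathcal{S}^e)$.
   Context: For positive integers $b_1,\ldots,b_t$ with $\gcd(b_1,\ldots,b_t)=1$, $\langle b_1,\ldots,b_t\rangle$ denotes the numerical semigroup of all non-negative integer linear combinations of $b_1,\ldots,b_t$. For a numerical semigroup $\mathcal{S}$, a pseudo-Frobenius number is an integer $x\notin\mathcal{S}$ such that $x+s\in\mathcal{S}$ for all $s\in\mathcal{S}$ with $s>0$ (equivalently, for all nonzero $s \in \mathcal{S}$); the type $\mathrm{type}(\mathcal{S})$ is the number of pseudo-Frobenius numbers of $\mathcal{S}$. *)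

theory Defs
  imports Main
begin

definition gen_semigroup :: "nat list \<Rightarrow> int set" where
  "gen_semigroup bs = {x. \<exists>c :: nat \<Rightarrow> nat. x = int (\<Sum>i<length bs. c i * bs ! i)}"

definition pseudo_frobenius :: "int set \<Rightarrow> int set" where
  "pseudo_frobenius S = {x. x \<notin> S \<and> (\<forall>s\<in>S. s > 0 \<longrightarrow> x + s \<in> S)}"

definition sg_type :: "int set \<Rightarrow> nat" where
  "sg_type S = card (pseudo_frobenius S)"

end

theory Submission imports Defs begin

text \<open>Write \<open>S = \<nat>a\<^sub>1 + T\<close> and \<open>S\<^sup>e = \<nat>a\<^sub>1 + eT\<close> with \<open>T = \<langle>a\<^sub>2, \<dots>, a\<^sub>n\<rangle>\<close>. The affine map
  \<open>z \<mapsto> ez + (e - 1)a\<^sub>1\<close> satisfies \<open>z \<in> S \<longleftrightarrow> ez + (e - 1)a\<^sub>1 \<in> S\<^sup>e\<close>: a representation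
  \<open>ez + (e - 1)a\<^sub>1 = ka\<^sub>1 + et\<close> forces \<open>e \<mid> k + 1\<close> because \<open>gcd(e, a\<^sub>1) = 1\<close>. Adding a positive
  element of \<open>S\<close> corresponds to adding \<open>e\<close> times it in \<open>S\<^sup>e\<close>, so the map carries the pseudo-Frobenius
  numbers of \<open>S\<close> bijectively onto those of \<open>S\<^sup>e\<close>. Only \<open>a\<^sub>1 > 0\<close> and \<open>gcd(e, a\<^sub>1) = 1\<close> are needed;
  \<open>T\<close> may be any additive submonoid of \<open>\<int>\<close>.\<close>

lemma zero_in_gen_semigroup: "0 \<in> gen_semigroup bs"
  unfolding gen_semigroup_def by (intro CollectI exI[of _ "\<lambda>_. 0"]) simp

lemma gen_semigroup_add:
  assumes "x \<in> gen_semigroup bs" "y \<in> gen_semigroup bs"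
  shows "x + y \<in> gen_semigroup bs"
proof -
  obtain c d where "x = int (\<Sum>i<length bs. c i * bs ! i)" "y = int (\<Sum>i<length bs. d i * bs ! i)"
    using assms unfolding gen_semigroup_def by auto
  then have "x + y = int (\<Sum>i<length bs. (c i + d i) * bs ! i)"
    by (simp add: sum.distrib add_mult_distrib)
  then show ?thesis unfolding gen_semigroup_def by (intro CollectI exI[of _ "\<lambda>i. c i + d i"])
qed

lemma gen_semigroup_Cons:
  "gen_semigroup (b # bs) = {int k * int b + t | k t. t \<in> gen_semigroup bs}"
proof (intro set_eqI iffI)
  fix z assume "z \<in> gen_semigroup (b # bs)"
  then obtain c where c: "z = int (\<Sum>i<length (b # bs). c i * (b # bs) ! i)"
    unfolding gen_semigroup_def by auto
  have "(\<Sum>i<length (b # bs). c i * (b # bs) ! i) = c 0 * b + (\<Sum>i<length bs. c (Suc i) * bs ! i)"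
    by (simp only: length_Cons sum.lessThan_Suc_shift) simp
  with c have "z = int (c 0) * int b + int (\<Sum>i<length bs. c (Suc i) * bs ! i)"
    by (simp only: of_nat_add of_nat_mult)
  moreover have "int (\<Sum>i<length bs. c (Suc i) * bs ! i) \<in> gen_semigroup bs"
    unfolding gen_semigroup_def by (intro CollectI exI[of _ "\<lambda>i. c (Suc i)"]) (rule refl)
  ultimately show "z \<in> {int k * int b + t | k t. t \<in> gen_semigroup bs}" by blast
next
  fix z assume "z \<in> {int k * int b + t | k t. t \<in> gen_semigroup bs}"
  then obtain k c where z: "z = int k * int b + int (\<Sum>i<length bs. c i * bs ! i)"
    unfolding gen_semigroup_def by auto
  define d where "d i = (if i = 0 then k else c (i - 1))" for i
  have "(\<Sum>i<length (b # bs). d i * (b # bs) ! i) = k * b + (\<Sum>i<length bs. c i * bs ! i)"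
    by (simp only: length_Cons sum.lessThan_Suc_shift) (simp add: d_def)
  with z have "z = int (\<Sum>i<length (b # bs). d i * (b # bs) ! i)" by simp
  then show "z \<in> gen_semigroup (b # bs)" unfolding gen_semigroup_def by blast
qed

lemma gen_semigroup_map_mult:
  "gen_semigroup (map (\<lambda>x. e * x) bs) = {int e * t | t. t \<in> gen_semigroup bs}"
proof -
  have "(\<Sum>i<length bs. c i * (e * bs ! i)) = e * (\<Sum>i<length bs. c i * bs ! i)" for c
    by (simp add: sum_distrib_left mult.left_commute)
  then show ?thesis unfolding gen_semigroup_def by auto
qed

locale coprime_dilation =
  fixes A E :: int and T :: "int set"
  assumes A_pos: "A > 0" and E_pos: "E > 0" and coprime_E_A: "coprime E A"
    and zero_in_T: "0 \<in> T" and T_add: "x \<in> T \<Longrightarrow> y \<in> T \<Longrightarrow> x + y \<in> T"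
begin

definition S :: "int set" where
  "S = {int k * A + t | k t. t \<in> T}"

definition Se :: "int set" where
  "Se = {int k * A + E * t | k t. t \<in> T}"

definition dilate :: "int \<Rightarrow> int" where
  "dilate z = E * z + (E - 1) * A"

lemma S_add: "x \<in> S \<Longrightarrow> y \<in> S \<Longrightarrow> x + y \<in> S"
proof -
  assume "x \<in> S" "y \<in> S"
  then obtain k1 t1 k2 t2 where "x = int k1 * A + t1" "y = int k2 * A + t2" "t1 \<in> T" "t2 \<in> T"
    unfolding S_def by auto
  then have "x + y = int (k1 + k2) * A + (t1 + t2)" "t1 + t2 \<in> T"
    by (auto simp: algebra_simps T_add)
  then show ?thesis unfolding S_def by blast
qed

lemma Se_add: "x \<in> Se \<Longrightarrow> y \<in> Se \<Longrightarrow> x + y \<in> Se"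
proof -
  assume "x \<in> Se" "y \<in> Se"
  then obtain k1 t1 k2 t2 where "x = int k1 * A + E * t1" "y = int k2 * A + E * t2" "t1 \<in> T" "t2 \<in> T"
    unfolding Se_def by auto
  then have "x + y = int (k1 + k2) * A + E * (t1 + t2)" "t1 + t2 \<in> T"
    by (auto simp: algebra_simps T_add)
  then show ?thesis unfolding Se_def by blast
qed

lemma A_in_S: "A \<in> S"
  unfolding S_def using zero_in_T by (intro CollectI exI[of _ 1] exI[of _ 0]) simp

lemma T_subset_S: "t \<in> T \<Longrightarrow> t \<in> S"
  unfolding S_def by (intro CollectI exI[of _ 0] exI[of _ t]) simp

lemma multiple_of_A_in_Se: "int k * A \<in> Se"
  unfolding Se_def using zero_in_T by (intro CollectI exI[of _ k] exI[of _ 0]) simp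

lemma mult_E_in_Se: "z \<in> S \<Longrightarrow> E * z \<in> Se"
proof -
  assume "z \<in> S"
  then obtain k t where "z = int k * A + t" "t \<in> T" unfolding S_def by auto
  moreover from this have "E * z = int (nat E * k) * A + E * t"
    using E_pos by (simp add: algebra_simps)
  ultimately show ?thesis unfolding Se_def by blast
qed

lemma dilate_in_Se_iff: "dilate z \<in> Se \<longleftrightarrow> z \<in> S"
proof
  assume "z \<in> S"
  have "dilate z = E * z + int (nat (E - 1)) * A"
    unfolding dilate_def using E_pos by simp
  with Se_add[OF mult_E_in_Se[OF \<open>z \<in> S\<close>] multiple_of_A_in_Se]
  show "dilate z \<in> Se" by metis
next
  assume "dilate z \<in> Se"
  then obtain k t where kt: "E * z + (E - 1) * A = int k * A + E * t" "t \<in> T"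
    unfolding Se_def dilate_def by auto
  then have eq: "E * (z + A - t) = (int k + 1) * A" by (simp add: algebra_simps)
  then have "E dvd (int k + 1) * A" by (metis dvd_triv_left)
  then have "E dvd int k + 1" using coprime_E_A by (simp add: coprime_dvd_mult_left_iff)
  then obtain m where m: "int k + 1 = E * m" by blast
  with E_pos have "m > 0" by (smt (verit) mult_nonneg_nonpos of_nat_0_le_iff)
  from eq m have "z + A - t = m * A" using E_pos by (simp add: mult.assoc)
  then have "z = int (nat (m - 1)) * A + t" using \<open>m > 0\<close> by (simp add: algebra_simps)
  then show "z \<in> S" unfolding S_def using kt(2) by blast
qed

lemma dilate_pseudo_frobenius:
  assumes "x \<in> pseudo_frobenius S"
  shows "dilate x \<in> pseudo_frobenius Se"
proof -
  have x_notin: "x \<notin> S" and x_gap: "\<And>s. s \<in> S \<Longrightarrow> s > 0 \<Longrightarrow> x + s \<in> S"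
    using assms unfolding pseudo_frobenius_def by auto
  have "dilate x + s \<in> Se" if "s \<in> Se" "s > 0" for s
  proof -
    obtain k t where s: "s = int k * A + E * t" "t \<in> T" using \<open>s \<in> Se\<close> unfolding Se_def by auto
    show ?thesis
    proof (cases k)
      case 0
      with s \<open>s > 0\<close> E_pos have "t > 0" by (simp add: zero_less_mult_iff)
      then have "x + t \<in> S" using x_gap T_subset_S s(2) by blast
      moreover have "dilate (x + t) = dilate x + s"
        using s 0 unfolding dilate_def by (simp add: algebra_simps)
      ultimately show ?thesis using dilate_in_Se_iff by metis
    next
      case (Suc j)
      have "x + A + t \<in> S" using x_gap A_in_S A_pos S_add T_subset_S s(2) by blast
      then have "E * (x + A + t) + int j * A \<in> Se"
        using mult_E_in_Se Se_add multiple_of_A_in_Se by blast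
      moreover have "E * (x + A + t) + int j * A = dilate x + s"
        using s Suc unfolding dilate_def by (simp add: algebra_simps)
      ultimately show ?thesis by simp
    qed
  qed
  with x_notin dilate_in_Se_iff show ?thesis unfolding pseudo_frobenius_def by auto
qed

lemma pseudo_frobenius_Se_dilate:
  assumes "y \<in> pseudo_frobenius Se"
  obtains x where "x \<in> pseudo_frobenius S" "y = dilate x"
proof -
  have y_notin: "y \<notin> Se" and y_gap: "\<And>s. s \<in> Se \<Longrightarrow> s > 0 \<Longrightarrow> y + s \<in> Se"
    using assms unfolding pseudo_frobenius_def by auto
  have "y + A \<in> Se" using y_gap[OF multiple_of_A_in_Se[of 1]] A_pos by simp
  then obtain k t where kt: "y + A = int k * A + E * t" "t \<in> T" unfolding Se_def by auto
  have "k = 0"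
  proof (rule ccontr)
    assume "k \<noteq> 0"
    then have "y = int (k - 1) * A + E * t" using kt(1) by (simp add: of_nat_diff algebra_simps)
    with kt(2) y_notin show False unfolding Se_def by blast
  qed
  define x where "x = t - A"
  have y_eq: "y = dilate x" unfolding dilate_def x_def using kt(1) \<open>k = 0\<close> by (simp add: algebra_simps)
  have "x + s \<in> S" if "s \<in> S" "s > 0" for s
  proof -
    have "y + E * s \<in> Se" using y_gap mult_E_in_Se that E_pos by simp
    moreover have "y + E * s = dilate (x + s)" using y_eq unfolding dilate_def by (simp add: algebra_simps)
    ultimately show ?thesis using dilate_in_Se_iff by simp
  qed
  moreover have "x \<notin> S" using y_notin dilate_in_Se_iff y_eq by simp
  ultimately have "x \<in> pseudo_frobenius S" unfolding pseudo_frobenius_def by auto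
  with y_eq show ?thesis using that by blast
qed

theorem card_pseudo_frobenius_eq: "card (pseudo_frobenius S) = card (pseudo_frobenius Se)"
proof -
  have "inj dilate" unfolding dilate_def inj_def using E_pos by auto
  moreover have "dilate ` pseudo_frobenius S = pseudo_frobenius Se"
    using dilate_pseudo_frobenius pseudo_frobenius_Se_dilate by blast
  ultimately show ?thesis by (metis card_image inj_on_subset subset_UNIV)
qed

end

theorem proposition1:
  fixes a :: "nat list" and e :: nat
  assumes "length a \<ge> 1"
    and "\<forall>i<length a. a ! i > 0"
    and "Gcd (set a) = 1"
    and "e > 0"
    and "gcd e (a ! 0) = 1"
  shows "sg_type (gen_semigroup a)
       = sg_type (gen_semigroup (a ! 0 # map (\<lambda>x. e * x) (tl a)))"
proof -
  have a_Cons: "a = a ! 0 # tl a" using assms(1) by (cases a) auto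
  interpret coprime_dilation "int (a ! 0)" "int e" "gen_semigroup (tl a)"
    using assms a_Cons zero_in_gen_semigroup gen_semigroup_add
    by unfold_locales (auto simp: coprime_iff_gcd_eq_1 simp del: nth_Cons_0)
  have "gen_semigroup a = S"
    unfolding S_def by (subst a_Cons, subst gen_semigroup_Cons) simp
  moreover have "gen_semigroup (a ! 0 # map (\<lambda>x. e * x) (tl a)) = Se"
    unfolding Se_def gen_semigroup_Cons gen_semigroup_map_mult by blast
  ultimately show ?thesis unfolding sg_type_def using card_pseudo_frobenius_eq by simp
qed

end
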